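(* Let $1 \le d \le n-1$ and set $c_j = \binom{n-1}{d}/\binom{n-1}{d-j}$ for $0 \le j \le d$. Then in $\mathbb{Q}[x_1,\dots,x_{n+d}]$, $$\binom{n}{d}\, x_1\cdots x_d = \sum_{j=0}^{d} (-1)^j c_j \sum_{\substack{J \subseteq \{1,\dots,n+d\},\ |J| = n\\ |J\cap\{1,\dots,d\}| = d-j}} e_n^d(x_J),$$ where $e_n^d(x_J)$ is the elementary symmetric polynomial of degree $d$ in the $n$ variables $x_i$, $i\in J$. Consequently the same identity holds over any field $K$ in which all $c_j$ are defined (e.g. $\mathrm{char}(K)=0$ or $\mathrm{char}(K)>n$). *)

theory Defs
  imports Main
begin

definition elem_sym :: "nat \<Rightarrow> (nat \<Rightarrow> 'a::comm_ring_1) \<Rightarrow> nat set \<Rightarrow> 'a" where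
  "elem_sym k x J = (\<Sum>S\<in>{S. S \<subseteq> J \<and> card S = k}. \<Prod>i\<in>S. x i)"

end

theory Submission
  imports Defs
begin

text \<open>
  Both sides are expanded in the squarefree monomials \<open>x_S\<close>, \<open>|S| = d\<close>. The monomial \<open>x_S\<close>
  occurs in \<open>e_d(x_J)\<close> iff \<open>S \<subseteq> J\<close>, and if \<open>m = |S - {1..d}|\<close>, the number of admissible \<open>J\<close>
  with \<open>|J \<inter> {1..d}| = d - j\<close> is \<open>C(m, j) C(n - m, d - j)\<close>. For \<open>m = 0\<close> only \<open>j = 0\<close>
  contributes, giving \<open>C(n, d)\<close>. For \<open>m > 0\<close> the weight \<open>c_j C(n - m, d - j)\<close> is, up to a factor
  independent of \<open>j\<close>, the polynomial \<open>C(n - 1 - d + j, m - 1)\<close> of degree \<open>m - 1\<close> in \<open>j\<close>; its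
  alternating sum against \<open>C(m, j)\<close> is an \<open>m\<close>-th finite difference and vanishes.
\<close>

lemma alternating_sum_choose_Suc:
  fixes g :: "nat \<Rightarrow> 'a::comm_ring_1"
  shows "(\<Sum>j\<le>Suc m. (-1)^j * of_nat (Suc m choose j) * g j)
       = (\<Sum>j\<le>m. (-1)^j * of_nat (m choose j) * (g j - g (Suc j)))"
proof -
  have "(\<Sum>j\<le>Suc m. (-1)^j * of_nat (Suc m choose j) * g j)
      = g 0 + (\<Sum>j\<le>m. (-1)^Suc j * of_nat (Suc m choose Suc j) * g (Suc j))"
    by (subst sum.atMost_Suc_shift) simp
  also have "\<dots> = g 0 + (\<Sum>j\<le>m. (-1)^Suc j * of_nat (m choose j) * g (Suc j))
      + (\<Sum>j\<le>m. (-1)^Suc j * of_nat (m choose Suc j) * g (Suc j))"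
    by (simp only: add.assoc flip: sum.distrib) (simp add: algebra_simps)
  also have "(\<Sum>j\<le>m. (-1)^Suc j * of_nat (m choose Suc j) * g (Suc j))
      = (\<Sum>j\<le>Suc m. (-1)^j * of_nat (m choose j) * g j) - g 0"
    by (subst sum.atMost_Suc_shift) simp
  also have "(\<Sum>j\<le>Suc m. (-1)^j * of_nat (m choose j) * g j) = (\<Sum>j\<le>m. (-1)^j * of_nat (m choose j) * g j)"
    by (simp add: binomial_eq_0)
  finally show ?thesis
    by (simp add: sum_subtractf sum_negf algebra_simps)
qed

lemma alternating_sum_choose_shift_eq_0:
  assumes "r < m"
  shows "(\<Sum>j\<le>m. (-1)^j * of_nat (m choose j) * of_nat ((c + j) choose r)) = (0::'a::comm_ring_1)"
  using assms
proof (induction m arbitrary: c r)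
  case 0 then show ?case by simp
next
  case (Suc m)
  show ?case
  proof (cases r)
    case 0
    then show ?thesis using choose_alternating_sum[of "Suc m", where 'a='a] by simp
  next
    case (Suc r')
    with Suc.prems have r': "r' < m" by simp
    have "(\<Sum>j\<le>Suc m. (-1)^j * of_nat (Suc m choose j) * (of_nat ((c + j) choose r) :: 'a))
       = (\<Sum>j\<le>m. (-1)^j * of_nat (m choose j) * (of_nat ((c + j) choose r) - of_nat ((c + Suc j) choose r)))"
      by (rule alternating_sum_choose_Suc)
    also have "\<dots> = - (\<Sum>j\<le>m. (-1)^j * of_nat (m choose j) * of_nat ((c + j) choose r'))"
      \<comment> \<open>Pascal's rule: \<open>C(c + j + 1, r' + 1) - C(c + j, r' + 1) = C(c + j, r')\<close>\<close>
      by (simp add: Suc sum_negf[symmetric] algebra_simps)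
    also have "\<dots> = 0" using Suc.IH[OF r'] by simp
    finally show ?thesis .
  qed
qed

lemma choose_mult_choose_diff_commute:
  fixes N k r :: nat
  shows "(N choose k) * ((N - k) choose r) = (N choose r) * ((N - r) choose k)"
proof (cases "k + r \<le> N")
  case True
  have "(N choose (k+r)) * ((k+r) choose k) = (N choose k) * ((N - k) choose r)"
    using choose_mult[of k "k+r" N] True by simp
  moreover have "(N choose (k+r)) * ((k+r) choose r) = (N choose r) * ((N - r) choose k)"
    using choose_mult[of r "k+r" N] True by simp
  ultimately show ?thesis by (simp add: binomial_symmetric[of k "k+r"] )
next
  case False
  then show ?thesis by (cases "k \<le> N"; cases "r \<le> N"; simp add: binomial_eq_0)
qed

lemma of_nat_choose_diff_ratio_commute:
  assumes "(of_nat (N choose k) :: 'a::field) \<noteq> 0" "(of_nat (N choose r) :: 'a) \<noteq> 0"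
  shows "(of_nat ((N - k) choose r) :: 'a) / of_nat (N choose r)
       = of_nat ((N - r) choose k) / of_nat (N choose k)"
  using assms arg_cong[OF choose_mult_choose_diff_commute[of N k r], of "of_nat :: nat \<Rightarrow> 'a"]
  by (simp add: field_simps)

lemma alternating_weighted_choose_sum_eq_0:
  fixes n d m :: nat
  assumes "d \<le> n - 1" "0 < m" "m \<le> d"
    and nonzero: "\<forall>j\<le>d. (of_nat ((n - 1) choose (d - j)) :: 'a::field) \<noteq> 0"
  shows "(\<Sum>j\<le>d. (-1)^j * (of_nat ((n - 1) choose d) / of_nat ((n - 1) choose (d - j)))
            * (of_nat ((m choose j) * ((n - m) choose (d - j))) :: 'a)) = 0"
proof -
  define N where "N = n - 1"
  define r where "r = m - 1"
  have term_eq: "(-1)^j * (of_nat (N choose d) / of_nat (N choose (d - j)))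
            * (of_nat ((m choose j) * ((n - m) choose (d - j))) :: 'a)
      = of_nat (N choose d) / of_nat (N choose r)
          * ((-1)^j * of_nat (m choose j) * of_nat ((N - d + j) choose r))" if "j \<le> d" for j
  proof -
    have "N - r = n - m" "N - (d - j) = N - d + j"
      using assms(1-3) that by (auto simp: N_def r_def)
    moreover have "(of_nat (N choose (d - j)) :: 'a) \<noteq> 0" "(of_nat (N choose r) :: 'a) \<noteq> 0"
      using nonzero that assms(2,3) by (auto simp: N_def r_def dest: spec[of _ "d - r"])
    ultimately have "(of_nat ((n - m) choose (d - j)) :: 'a) / of_nat (N choose (d - j))
        = of_nat ((N - d + j) choose r) / of_nat (N choose r)"
      using of_nat_choose_diff_ratio_commute[of N "d - j" r, where 'a='a] by simp
    then show ?thesis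
      by (simp add: mult.assoc mult.left_commute[of "(-1)^j"] flip: times_divide_eq_right)
  qed
  have "(\<Sum>j\<le>d. (-1)^j * (of_nat (N choose d) / of_nat (N choose (d - j)))
            * (of_nat ((m choose j) * ((n - m) choose (d - j))) :: 'a))
      = of_nat (N choose d) / of_nat (N choose r)
          * (\<Sum>j\<le>d. (-1)^j * of_nat (m choose j) * of_nat ((N - d + j) choose r))"
    unfolding sum_distrib_left by (intro sum.cong refl term_eq) simp
  also have "(\<Sum>j\<le>d. (-1)^j * of_nat (m choose j) * (of_nat ((N - d + j) choose r) :: 'a))
      = (\<Sum>j\<le>m. (-1)^j * of_nat (m choose j) * of_nat ((N - d + j) choose r))"
    by (rule sum.mono_neutral_right) (use assms(3) in \<open>auto simp: binomial_eq_0\<close>)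
  also have "\<dots> = 0"
    by (rule alternating_sum_choose_shift_eq_0) (use assms(2) in \<open>simp add: r_def\<close>)
  finally show ?thesis by (simp add: N_def)
qed

lemma alternating_weighted_choose_sum:
  fixes n d m :: nat
  assumes "d \<le> n - 1" "m \<le> d"
    and nonzero: "\<forall>j\<le>d. (of_nat ((n - 1) choose (d - j)) :: 'a::field) \<noteq> 0"
  shows "(\<Sum>j\<le>d. (-1)^j * (of_nat ((n - 1) choose d) / of_nat ((n - 1) choose (d - j)))
            * (of_nat ((m choose j) * ((n - m) choose (d - j))) :: 'a))
         = (if m = 0 then of_nat (n choose d) else 0)"
proof (cases "m = 0")
  case True
  have "(of_nat ((n - 1) choose d) :: 'a) \<noteq> 0" using nonzero by fastforce
  with True show ?thesis
    by (simp add: sum.atMost_shift binomial_eq_0 del: sum.atMost_Suc)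
next
  case False
  with alternating_weighted_choose_sum_eq_0[OF assms(1) _ assms(2,3)] show ?thesis by simp
qed

lemma card_supersets:
  assumes "finite U" "T \<subseteq> U" "k \<le> card U"
  shows "card {A. T \<subseteq> A \<and> A \<subseteq> U \<and> card A = k} = (card U - card T) choose (card U - k)"
proof -
  have "bij_betw (\<lambda>A. U - A) {A. T \<subseteq> A \<and> A \<subseteq> U \<and> card A = k}
                               {C. C \<subseteq> U - T \<and> card C = card U - k}"
  proof (rule bij_betw_byWitness[where f'="\<lambda>C. U - C"])
    show "(\<lambda>C. U - C) ` {C. C \<subseteq> U - T \<and> card C = card U - k} \<subseteq> {A. T \<subseteq> A \<and> A \<subseteq> U \<and> card A = k}"
    proof (rule image_subsetI)
      fix C assume "C \<in> {C. C \<subseteq> U - T \<and> card C = card U - k}"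
      then have "C \<subseteq> U - T" "C \<subseteq> U" "card C = card U - k" by auto
      with assms have "card (U - C) = k"
        by (simp add: card_Diff_subset finite_subset)
      with \<open>C \<subseteq> U - T\<close> \<open>T \<subseteq> U\<close> show "U - C \<in> {A. T \<subseteq> A \<and> A \<subseteq> U \<and> card A = k}"
        by auto
    qed
  qed (use assms in \<open>auto simp: card_Diff_subset finite_subset\<close>)
  then have "card {A. T \<subseteq> A \<and> A \<subseteq> U \<and> card A = k} = card (U - T) choose (card U - k)"
    using assms by (simp add: bij_betw_same_card n_subsets)
  then show ?thesis
    using assms by (simp add: card_Diff_subset finite_subset)
qed

lemma card_supersets_disjoint_Un:
  assumes "D \<inter> E = {}" "T \<subseteq> D \<union> E"
  shows "card {J. T \<subseteq> J \<and> J \<subseteq> D \<union> E \<and> card (J \<inter> D) = a \<and> card (J \<inter> E) = b}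
       = card {A. T \<inter> D \<subseteq> A \<and> A \<subseteq> D \<and> card A = a} * card {B. T \<inter> E \<subseteq> B \<and> B \<subseteq> E \<and> card B = b}"
proof -
  define As where "As = {A. T \<inter> D \<subseteq> A \<and> A \<subseteq> D \<and> card A = a}"
  define Bs where "Bs = {B. T \<inter> E \<subseteq> B \<and> B \<subseteq> E \<and> card B = b}"
  have "bij_betw (\<lambda>J. (J \<inter> D, J \<inter> E))
          {J. T \<subseteq> J \<and> J \<subseteq> D \<union> E \<and> card (J \<inter> D) = a \<and> card (J \<inter> E) = b} (As \<times> Bs)"
  proof (rule bij_betw_byWitness[where f'="\<lambda>(A, B). A \<union> B"])
    show "(\<lambda>(A, B). A \<union> B) ` (As \<times> Bs)
        \<subseteq> {J. T \<subseteq> J \<and> J \<subseteq> D \<union> E \<and> card (J \<inter> D) = a \<and> card (J \<inter> E) = b}"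
    proof (rule image_subsetI)
      fix p assume "p \<in> As \<times> Bs"
      then obtain A B where "p = (A, B)" "A \<in> As" "B \<in> Bs" by blast
      moreover from this assms(1) have "(A \<union> B) \<inter> D = A" "(A \<union> B) \<inter> E = B"
        by (auto simp: As_def Bs_def)
      ultimately show "(\<lambda>(A, B). A \<union> B) p \<in> {J. T \<subseteq> J \<and> J \<subseteq> D \<union> E \<and> card (J \<inter> D) = a \<and> card (J \<inter> E) = b}"
        using assms(2) by (auto simp: As_def Bs_def)
    qed
  qed (use assms(1) in \<open>auto simp: As_def Bs_def\<close>)
  then show ?thesis
    by (simp add: bij_betw_same_card card_cartesian_product As_def Bs_def)
qed

lemma card_supersets_initial_segment_trace:
  fixes n d j :: nat
  assumes "S \<subseteq> {1..n+d}" "card S = d" "j \<le> d" "d \<le> n"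
  shows "card {J. J \<subseteq> {1..n+d} \<and> card J = n \<and> card (J \<inter> {1..d}) = d - j \<and> S \<subseteq> J}
       = (card (S - {1..d}) choose j) * ((n - card (S - {1..d})) choose (d - j))"
proof -
  define D where "D = {1..d}"
  define E where "E = {Suc d..n+d}"
  define m where "m = card (S - D)"
  have DE: "{1..n+d} = D \<union> E" "D \<inter> E = {}" by (auto simp: D_def E_def)
  have fin: "finite D" "finite E" "finite S" "card D = d" "card E = n"
    using assms(1) by (auto simp: D_def E_def finite_subset)
  have "S \<inter> E = S - D" "S - D \<subseteq> E" using assms(1) DE by auto
  have "card (S \<inter> D) = d - m"
    and m_le: "m \<le> d"
    unfolding m_def using card_Int_Diff[OF fin(3), of D] assms(2) by linarith+
  have card_J: "card J = card (J \<inter> D) + card (J \<inter> E)" if "J \<subseteq> D \<union> E" for J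
  proof -
    have "J = (J \<inter> D) \<union> (J \<inter> E)" using that by blast
    also have "card \<dots> = card (J \<inter> D) + card (J \<inter> E)"
      using fin DE(2) by (intro card_Un_disjoint) auto
    finally show ?thesis .
  qed
  have split_eq: "{J. J \<subseteq> {1..n+d} \<and> card J = n \<and> card (J \<inter> {1..d}) = d - j \<and> S \<subseteq> J}
      = {J. S \<subseteq> J \<and> J \<subseteq> D \<union> E \<and> card (J \<inter> D) = d - j \<and> card (J \<inter> E) = n - (d - j)}"
    unfolding DE(1) D_def[symmetric]
  proof (rule Collect_cong)
    fix J
    show "(J \<subseteq> D \<union> E \<and> card J = n \<and> card (J \<inter> D) = d - j \<and> S \<subseteq> J)
      \<longleftrightarrow> (S \<subseteq> J \<and> J \<subseteq> D \<union> E \<and> card (J \<inter> D) = d - j \<and> card (J \<inter> E) = n - (d - j))"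
      using card_J[of J] assms(3,4) by auto
  qed
  have "card {J. J \<subseteq> {1..n+d} \<and> card J = n \<and> card (J \<inter> {1..d}) = d - j \<and> S \<subseteq> J}
      = card {A. S \<inter> D \<subseteq> A \<and> A \<subseteq> D \<and> card A = d - j}
        * card {B. S \<inter> E \<subseteq> B \<and> B \<subseteq> E \<and> card B = n - (d - j)}"
    unfolding split_eq using DE assms(1) by (intro card_supersets_disjoint_Un) auto
  also have "card {A. S \<inter> D \<subseteq> A \<and> A \<subseteq> D \<and> card A = d - j} = m choose j"
    using fin \<open>card (S \<inter> D) = d - m\<close> m_le assms(3) by (simp add: card_supersets)
  also have "card {B. S \<inter> E \<subseteq> B \<and> B \<subseteq> E \<and> card B = n - (d - j)} = (n - m) choose (d - j)"
    using card_supersets[of E "S \<inter> E" "n - (d - j)"] fin \<open>S \<inter> E = S - D\<close> \<open>S - D \<subseteq> E\<close> assms(3,4)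
    by (simp add: m_def)
  finally show ?thesis by (simp add: m_def D_def)
qed

lemma sum_signed_card_supersets_initial_segment:
  fixes n d :: nat
  assumes "d \<le> n - 1" "S \<subseteq> {1..n+d}" "card S = d"
    and "\<forall>j\<le>d. (of_nat ((n - 1) choose (d - j)) :: 'a::field) \<noteq> 0"
  shows "(\<Sum>j\<le>d. (-1)^j * (of_nat ((n - 1) choose d) / of_nat ((n - 1) choose (d - j)))
            * (of_nat (card {J. J \<subseteq> {1..n+d} \<and> card J = n \<and> card (J \<inter> {1..d}) = d - j \<and> S \<subseteq> J}) :: 'a))
         = (if S = {1..d} then of_nat (n choose d) else 0)"
proof -
  define m where "m = card (S - {1..d})"
  have "d \<le> n" using assms(1) by simp
  have "finite S" using assms(2) finite_subset by blast
  then have "m \<le> d" using assms(3) card_mono[of S "S - {1..d}"] by (auto simp: m_def)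
  have m_eq_0_iff: "m = 0 \<longleftrightarrow> S = {1..d}"
  proof
    assume "m = 0"
    with \<open>finite S\<close> have "S \<subseteq> {1..d}" by (auto simp: m_def)
    with assms(3) show "S = {1..d}" by (intro card_subset_eq) auto
  qed (simp add: m_def)
  have "(\<Sum>j\<le>d. (-1)^j * (of_nat ((n - 1) choose d) / of_nat ((n - 1) choose (d - j)))
            * (of_nat (card {J. J \<subseteq> {1..n+d} \<and> card J = n \<and> card (J \<inter> {1..d}) = d - j \<and> S \<subseteq> J}) :: 'a))
      = (\<Sum>j\<le>d. (-1)^j * (of_nat ((n - 1) choose d) / of_nat ((n - 1) choose (d - j)))
            * of_nat ((m choose j) * ((n - m) choose (d - j))))"
    using card_supersets_initial_segment_trace[OF assms(2,3) _ \<open>d \<le> n\<close>]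
    by (intro sum.cong refl) (simp add: m_def)
  also have "\<dots> = (if m = 0 then of_nat (n choose d) else 0)"
    using assms(1) \<open>m \<le> d\<close> assms(4) by (rule alternating_weighted_choose_sum)
  finally show ?thesis by (simp only: m_eq_0_iff)
qed

lemma sum_elem_sym_eq_sum_card_supersets:
  assumes "finite U" "\<forall>J\<in>F. J \<subseteq> U"
  shows "(\<Sum>J\<in>F. elem_sym k x J)
       = (\<Sum>S\<in>{S. S \<subseteq> U \<and> card S = k}. of_nat (card {J\<in>F. S \<subseteq> J}) * (\<Prod>i\<in>S. x i))"
proof -
  have "finite F" using assms by (intro finite_subset[of F "Pow U"]) auto
  have "(\<Sum>J\<in>F. elem_sym k x J) = (\<Sum>J\<in>F. \<Sum>S\<in>{S. S \<subseteq> U \<and> card S = k \<and> S \<subseteq> J}. \<Prod>i\<in>S. x i)"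
    unfolding elem_sym_def using assms(2) by (intro sum.cong refl arg_cong2[where f=sum]) auto
  also have "\<dots> = (\<Sum>S\<in>{S. S \<subseteq> U \<and> card S = k}. \<Sum>J\<in>{J\<in>F. S \<subseteq> J}. \<Prod>i\<in>S. x i)"
    using sum.swap_restrict[OF \<open>finite F\<close>, of "{S. S \<subseteq> U \<and> card S = k}" "\<lambda>J S. \<Prod>i\<in>S. x i" "\<lambda>J S. S \<subseteq> J"]
      assms(1) by simp
  finally show ?thesis by simp
qed

theorem mainTheorem10:
  fixes n d :: nat and x :: "nat \<Rightarrow> 'a::field"
  assumes "1 \<le> d" and "d \<le> n - 1"
    and "\<forall>j\<le>d. (of_nat ((n - 1) choose (d - j)) :: 'a) \<noteq> 0"
  shows "of_nat (n choose d) * (\<Prod>i\<in>{1..d}. x i) =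
    (\<Sum>j\<le>d. (-1) ^ j * (of_nat ((n - 1) choose d) / of_nat ((n - 1) choose (d - j)))
       * (\<Sum>J\<in>{J. J \<subseteq> {1..n + d} \<and> card J = n \<and> card (J \<inter> {1..d}) = d - j}.
            elem_sym d x J))"
proof -
  define w :: "nat \<Rightarrow> 'a"
    where "w j = (-1) ^ j * (of_nat ((n - 1) choose d) / of_nat ((n - 1) choose (d - j)))" for j
  define F where "F j = {J. J \<subseteq> {1..n + d} \<and> card J = n \<and> card (J \<inter> {1..d}) = d - j}" for j
  let ?S = "{S. S \<subseteq> {1..n + d} \<and> card S = d}"
  have "(\<Sum>j\<le>d. w j * (\<Sum>J\<in>F j. elem_sym d x J))
      = (\<Sum>j\<le>d. w j * (\<Sum>S\<in>?S. of_nat (card {J\<in>F j. S \<subseteq> J}) * (\<Prod>i\<in>S. x i)))"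
    by (intro sum.cong refl arg_cong2[where f = "(*)"] sum_elem_sym_eq_sum_card_supersets)
       (auto simp: F_def)
  also have "\<dots> = (\<Sum>S\<in>?S. (\<Sum>j\<le>d. w j * of_nat (card {J\<in>F j. S \<subseteq> J})) * (\<Prod>i\<in>S. x i))"
    by (simp add: sum_distrib_left sum_distrib_right mult.assoc) (rule sum.swap)
  also have "\<dots> = (\<Sum>S\<in>?S. (if S = {1..d} then of_nat (n choose d) else 0) * (\<Prod>i\<in>S. x i))"
    using sum_signed_card_supersets_initial_segment[OF assms(2) _ _ assms(3)]
    by (intro sum.cong refl) (simp add: w_def F_def conj_assoc)
  also have "\<dots> = of_nat (n choose d) * (\<Prod>i\<in>{1..d}. x i)"
  proof -
    have "finite ?S" by (rule finite_subset[of _ "Pow {1..n + d}"]) auto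
    moreover have "{1..d} \<in> ?S" by auto
    ultimately show ?thesis by (simp add: sum.delta' if_distrib[of "\<lambda>c. c * _"] cong: if_cong)
  qed
  finally show ?thesis by (simp add: w_def F_def)
qed

end
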